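(* Let $P$ be a regular polygon surface all of whose faces have degree in $\{5,7,8,9,10\}$, and let $f$ be a face of $P$ of degree $n\geq 7$. If $f$ has positive facial curvature, then every vertex incident to $f$ has the form $(5^2,n)$, i.e. has degree three and is incident to exactly two faces of degree five and one face (namely $f$) of degree $n$. Moreover, if $f$ is incident to a vertex with negative vertex curvature, then $f$ has negative facial curvature.
   Context: A regular polygon surface (RPS) is a triple $(\Sigma,\Gamma,\psi)$ where $\Gamma$ is a finite graph embedded in a closed surface $\Sigma$ so that every face (component of $\Sigma\setminus\Gamma$) has closure a closed $2$-cell, the closures of two faces meet in the empty set, a vertex, or an edge, and $\psi:\Sigma\to\mathbb{R}^3$ is continuous and maps each face of degree $k$ (number of incident edges) onto a regular Euclidean $k$-gon with unit edge lengths; the images of two adjacent faces meet in exactly one vertex or exactly one edge with its endpoints. The vertex curvature $k_v$ of a vertex $v$ is $2\pi$ minus the sum, over faces containing $v$, of the interior angle at $v$ of the regular polygon that is the image of that face. The facial curvature of a face $f$ is $k_f=\sum_{v\in f} k_v/d_v$, summing over vertices $v$ incident to $f$, where $d_v$ is the degree of $v$. *)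

theory Defs
  imports "HOL-Analysis.Analysis"
begin

text \<open>Vertices have type 'v; a face is a list of distinct vertices in cyclic
  boundary order; F is the finite set of faces; pos gives the image under psi
  of each vertex in R^3.\<close>

definition face_edges :: "'v list \<Rightarrow> 'v set set" where
  "face_edges f = {{f ! i, f ! (Suc i mod length f)} | i. i < length f}"

definition graph_edges :: "'v list set \<Rightarrow> 'v set set" where
  "graph_edges F = (\<Union>f\<in>F. face_edges f)"

definition faces_at :: "'v list set \<Rightarrow> 'v \<Rightarrow> 'v list set" where
  "faces_at F v = {g \<in> F. v \<in> set g}"

definition adj_at :: "'v list set \<Rightarrow> 'v \<Rightarrow> 'v list \<Rightarrow> 'v list \<Rightarrow> bool" where
  "adj_at F v f g \<longleftrightarrow> f \<in> F \<and> g \<in> F \<and> f \<noteq> g \<and>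
     (\<exists>e. v \<in> e \<and> e \<in> face_edges f \<and> e \<in> face_edges g)"

definition adj :: "'v list set \<Rightarrow> 'v list \<Rightarrow> 'v list \<Rightarrow> bool" where
  "adj F f g \<longleftrightarrow> f \<in> F \<and> g \<in> F \<and> f \<noteq> g \<and> face_edges f \<inter> face_edges g \<noteq> {}"

definition regular_unit_polygon :: "nat \<Rightarrow> (nat \<Rightarrow> real^3) \<Rightarrow> bool" where
  "regular_unit_polygon k p \<longleftrightarrow> k \<ge> 3 \<and>
     (\<exists>c u w r. r > 0 \<and> norm u = 1 \<and> norm w = 1 \<and> inner u w = 0 \<and>
        (\<forall>i<k. p i = c + r *\<^sub>R (cos (2 * pi * real i / real k) *\<^sub>R u
                                + sin (2 * pi * real i / real k) *\<^sub>R w)) \<and>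
        dist (p 0) (p 1) = 1)"

definition face_image :: "('v \<Rightarrow> real^3) \<Rightarrow> 'v list \<Rightarrow> (real^3) set" where
  "face_image pos f = convex hull (pos ` set f)"

definition rps :: "'v list set \<Rightarrow> ('v \<Rightarrow> real^3) \<Rightarrow> bool" where
  "rps F pos \<longleftrightarrow>
     finite F \<and> F \<noteq> {} \<and>
     \<comment> \<open>faces are closed 2-cells bounded by cycles of length at least 3\<close>
     (\<forall>f\<in>F. distinct f \<and> length f \<ge> 3) \<and>
     \<comment> \<open>closed surface: every edge lies on exactly two faces\<close>
     (\<forall>e\<in>graph_edges F. card {g\<in>F. e \<in> face_edges g} = 2) \<and>
     \<comment> \<open>closed surface: the faces around each vertex form a single cycle (disc link)\<close>
     (\<forall>v. \<forall>f\<in>faces_at F v. \<forall>g\<in>faces_at F v. (adj_at F v)\<^sup>*\<^sup>* f g) \<and>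
     \<comment> \<open>the surface is connected\<close>
     (\<forall>f\<in>F. \<forall>g\<in>F. (adj F)\<^sup>*\<^sup>* f g) \<and>
     \<comment> \<open>closures of two faces meet in the empty set, a vertex, or an edge\<close>
     (\<forall>f\<in>F. \<forall>g\<in>F. f \<noteq> g \<longrightarrow>
        set f \<inter> set g = {} \<or> card (set f \<inter> set g) = 1 \<or>
        (set f \<inter> set g \<in> face_edges f \<inter> face_edges g)) \<and>
     \<comment> \<open>each face is mapped onto a regular unit polygon, vertices to corners in order\<close>
     (\<forall>f\<in>F. regular_unit_polygon (length f) (\<lambda>i. pos (f ! i))) \<and>
     \<comment> \<open>images of two adjacent faces meet in exactly one vertex or exactly one edge\<close>
     (\<forall>f\<in>F. \<forall>g\<in>F. f \<noteq> g \<longrightarrow> set f \<inter> set g \<noteq> {} \<longrightarrow>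
        (\<exists>v\<in>set f \<inter> set g. face_image pos f \<inter> face_image pos g = {pos v}) \<or>
        (\<exists>v w. {v, w} \<in> face_edges f \<inter> face_edges g \<and>
           face_image pos f \<inter> face_image pos g = closed_segment (pos v) (pos w)))"

definition vdeg :: "'v list set \<Rightarrow> 'v \<Rightarrow> nat" where
  "vdeg F v = card {e \<in> graph_edges F. v \<in> e}"

definition interior_angle :: "nat \<Rightarrow> real" where
  "interior_angle k = pi - 2 * pi / real k"

definition vertex_curvature :: "'v list set \<Rightarrow> 'v \<Rightarrow> real" where
  "vertex_curvature F v = 2 * pi - (\<Sum>g\<in>faces_at F v. interior_angle (length g))"

definition facial_curvature :: "'v list set \<Rightarrow> 'v list \<Rightarrow> real" where
  "facial_curvature F f = (\<Sum>v\<in>set f. vertex_curvature F v / real (vdeg F v))"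

definition vertex_type_55n :: "'v list set \<Rightarrow> 'v \<Rightarrow> nat \<Rightarrow> bool" where
  "vertex_type_55n F v n \<longleftrightarrow> vdeg F v = 3 \<and> card (faces_at F v) = 3 \<and>
     card {g \<in> faces_at F v. length g = 5} = 2 \<and>
     card {g \<in> faces_at F v. length g = n} = 1"

end

theory Submission
  imports Defs
begin

text \<open>Let f have n \<ge> 7 sides. At a vertex of degree three the three unit edge vectors have a
  nonnegative Gram determinant, so the three face angles there sum to at most 2 pi. As
  2 (5 pi/7) + 3 pi/5 > 2 pi, both other faces at a degree-three vertex of f are pentagons: the
  vertex has type (5^2, n) and curvature pi (2/n - 1/5) \<ge> 0. Every other vertex of f has degree
  at least four and contributes at most pi (1/(2n) - 1/5) to the facial curvature, which is
  then negative, except possibly when n = 7 and exactly one vertex v is not of type (5^2, n).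
  Then both neighbours of v on f are of type (5^2, n). Continuing the pentagons around them
  with the linear recurrence satisfied by the corners of a regular polygon fixes the angles
  between the edges at v so rigidly that v cannot have degree four, and degree at least five
  makes its contribution small enough.\<close>

text \<open>The recurrence has characteristic polynomial (X - 1) (X^2 - 2 cos h X + 1), whose roots are
  1 and exp (\<plusminus>i h).\<close>

lemma cos_sin_three_term_recurrence:
  fixes t h :: real
  shows "cos (t + 3*h) - (1 + 2 * cos h) * cos (t + 2*h) + (1 + 2 * cos h) * cos (t + h) - cos t = 0"
    and "sin (t + 3*h) - (1 + 2 * cos h) * sin (t + 2*h) + (1 + 2 * cos h) * sin (t + h) - sin t = 0"
proof -
  have half: "(t + 3*h + (t + h)) / 2 = t + 2*h" "(t + 3*h - (t + h)) / 2 = h"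
    "(t + 2*h + t) / 2 = t + h" "(t + 2*h - t) / 2 = h"
    by simp_all
  have "cos (t + 3*h) + cos (t + h) = 2 * cos (t + 2*h) * cos h"
       "cos (t + 2*h) + cos t = 2 * cos (t + h) * cos h"
       "sin (t + 3*h) + sin (t + h) = 2 * sin (t + 2*h) * cos h"
       "sin (t + 2*h) + sin t = 2 * sin (t + h) * cos h"
    using cos_plus_cos[of "t + 3*h" "t + h"] cos_plus_cos[of "t + 2*h" t]
      sin_plus_sin[of "t + 3*h" "t + h"] sin_plus_sin[of "t + 2*h" t]
    by (simp_all only: half)
  then show "cos (t + 3*h) - (1 + 2 * cos h) * cos (t + 2*h) + (1 + 2 * cos h) * cos (t + h) - cos t = 0"
    and "sin (t + 3*h) - (1 + 2 * cos h) * sin (t + 2*h) + (1 + 2 * cos h) * sin (t + h) - sin t = 0"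
    by (simp_all add: algebra_simps)
qed

definition circle_point :: "'a::real_vector \<Rightarrow> real \<Rightarrow> 'a \<Rightarrow> 'a \<Rightarrow> real \<Rightarrow> 'a" where
  "circle_point c r u w t = c + r *\<^sub>R (cos t *\<^sub>R u + sin t *\<^sub>R w)"

lemma inner_circle_point_diff:
  fixes c u w :: "'a::real_inner" and r :: real
  assumes "norm u = 1" "norm w = 1" "inner u w = 0"
  defines "Q \<equiv> circle_point c r u w"
  shows "inner (Q s - Q t) (Q s' - Q t') = r\<^sup>2 * (cos (s - s') - cos (s - t') - cos (t - s') + cos (t - t'))"
proof -
  define e where "e t = cos t *\<^sub>R u + sin t *\<^sub>R w" for t
  have "inner u u = 1" "inner w w = 1" using assms(1,2) by (simp_all add: dot_square_norm)
  then have ee: "inner (e s) (e t) = cos (s - t)" for s t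
    using assms(3) by (simp add: e_def inner_add_left inner_add_right inner_commute cos_diff)
  have "Q s - Q t = r *\<^sub>R (e s - e t)" "Q s' - Q t' = r *\<^sub>R (e s' - e t')"
    by (simp_all add: Q_def circle_point_def e_def algebra_simps)
  then show ?thesis
    by (simp only:) (simp add: inner_diff_left inner_diff_right ee power2_eq_square algebra_simps)
qed

lemma circle_point_chord:
  fixes c u w :: "'a::real_inner" and r :: real
  assumes "norm u = 1" "norm w = 1" "inner u w = 0"
  defines "Q \<equiv> circle_point c r u w"
  shows "(norm (Q (t + h) - Q t))\<^sup>2 = r\<^sup>2 * (2 - 2 * cos h)"
  unfolding dot_square_norm[symmetric] Q_def inner_circle_point_diff[OF assms(1-3)] by simp

lemma circle_point_inner_chords:
  fixes c u w :: "'a::real_inner" and r :: real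
  assumes "norm u = 1" "norm w = 1" "inner u w = 0"
  defines "Q \<equiv> circle_point c r u w"
  shows "inner (Q t - Q (t + h)) (Q (t + 2*h) - Q (t + h)) = - cos h * (r\<^sup>2 * (2 - 2 * cos h))"
proof -
  have "inner (Q t - Q (t + h)) (Q (t + 2*h) - Q (t + h)) = r\<^sup>2 * (cos (2*h) - 2 * cos h + 1)"
    unfolding Q_def inner_circle_point_diff[OF assms(1-3)] by (simp add: algebra_simps)
  also have "\<dots> = - cos h * (r\<^sup>2 * (2 - 2 * cos h))"
    by (simp only: cos_double_cos) (simp add: algebra_simps power2_eq_square)
  finally show ?thesis .
qed

lemma circle_point_three_term_recurrence:
  fixes c u w :: "'a::real_vector" and r :: real
  defines "Q \<equiv> circle_point c r u w"
  shows "Q (t + 3*h) - (1 + 2 * cos h) *\<^sub>R Q (t + 2*h) + (1 + 2 * cos h) *\<^sub>R Q (t + h) - Q t = 0"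
proof -
  let ?C = "1 + 2 * cos h"
  have "Q (t + 3*h) - ?C *\<^sub>R Q (t + 2*h) + ?C *\<^sub>R Q (t + h) - Q t
      = r *\<^sub>R ((cos (t + 3*h) - ?C * cos (t + 2*h) + ?C * cos (t + h) - cos t) *\<^sub>R u
              + (sin (t + 3*h) - ?C * sin (t + 2*h) + ?C * sin (t + h) - sin t) *\<^sub>R w)"
    by (simp add: Q_def circle_point_def algebra_simps)
  then show ?thesis by (simp add: cos_sin_three_term_recurrence)
qed

lemma regular_unit_polygon_circle:
  assumes "regular_unit_polygon k p"
  obtains c r u w where "norm u = 1" "norm w = 1" "inner u w = 0"
    and "r\<^sup>2 * (2 - 2 * cos (2*pi/k)) = 1"
    and "\<And>j. p (j mod k) = circle_point c r u w (j * (2*pi/k))"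
proof -
  from assms obtain c u w r where k: "k \<ge> 3" and uw: "norm u = 1" "norm w = 1" "inner u w = 0"
    and p: "\<forall>i<k. p i = circle_point c r u w (2 * pi * real i / real k)"
    and p01: "dist (p 0) (p 1) = 1"
    unfolding regular_unit_polygon_def circle_point_def by blast
  define Q where "Q = circle_point c r u w"
  have pQ: "p (j mod k) = Q (j * (2*pi/k))" for j
  proof -
    have "real j = real (j mod k) + real (j div k) * real k"
      by (metis of_nat_add of_nat_mult mod_div_mult_eq)
    then have "j * (2*pi/k) = 2 * pi * real (j mod k) / real k + 2 * real (j div k) * pi"
      using k by (simp add: field_simps)
    moreover have "Q (x + 2 * real m * pi) = Q x" for x m
      by (simp add: Q_def circle_point_def cos_add sin_add)
    ultimately show ?thesis using p k by (simp add: Q_def)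
  qed
  have "1 = (norm (Q (2*pi/k) - Q 0))\<^sup>2"
    using pQ[of 0] pQ[of 1] p01 k by (simp add: dist_norm norm_minus_commute)
  also have "\<dots> = r\<^sup>2 * (2 - 2 * cos (2*pi/k))"
    unfolding dot_square_norm[symmetric] Q_def inner_circle_point_diff[OF uw] by simp
  finally show thesis using that[OF uw] pQ by (simp add: Q_def)
qed

context
  fixes k :: nat and p :: "nat \<Rightarrow> real^3"
  assumes reg: "regular_unit_polygon k p"
begin

lemma regular_unit_polygon_side: "norm (p ((j+1) mod k) - p (j mod k)) = 1"
proof -
  obtain c r u w where uw: "norm u = 1" "norm w = 1" "inner u w = 0"
    and r: "r\<^sup>2 * (2 - 2 * cos (2*pi/k)) = 1"
    and p: "\<And>j. p (j mod k) = circle_point c r u w (j * (2*pi/k))"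
    using regular_unit_polygon_circle[OF reg] by metis
  define h where "h = 2*pi/k"
  have "real (j+1) * h = real j * h + h" by (simp add: algebra_simps)
  then have "(norm (p ((j+1) mod k) - p (j mod k)))\<^sup>2 = 1"
    using circle_point_chord[OF uw] r unfolding p h_def[symmetric] by simp
  then show ?thesis by (smt (verit) norm_ge_zero power2_eq_1_iff)
qed

lemma regular_unit_polygon_inner:
  "inner (p (j mod k) - p ((j+1) mod k)) (p ((j+2) mod k) - p ((j+1) mod k)) = - cos (2*pi/k)"
proof -
  obtain c r u w where uw: "norm u = 1" "norm w = 1" "inner u w = 0"
    and r: "r\<^sup>2 * (2 - 2 * cos (2*pi/k)) = 1"
    and p: "\<And>j. p (j mod k) = circle_point c r u w (j * (2*pi/k))"
    using regular_unit_polygon_circle[OF reg] by metis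
  define h where "h = 2*pi/k"
  have "real (j+1) * h = real j * h + h" "real (j+2) * h = real j * h + 2 * h"
    by (simp_all add: algebra_simps)
  then show ?thesis
    using circle_point_inner_chords[OF uw] r unfolding p h_def[symmetric] by simp
qed

lemma regular_unit_polygon_recurrence:
  "p ((j+3) mod k) - (1 + 2 * cos (2*pi/k)) *\<^sub>R p ((j+2) mod k)
     + (1 + 2 * cos (2*pi/k)) *\<^sub>R p ((j+1) mod k) - p (j mod k) = 0"
proof -
  obtain c r u w where p: "\<And>j. p (j mod k) = circle_point c r u w (j * (2*pi/k))"
    using regular_unit_polygon_circle[OF reg] by metis
  define h where "h = 2*pi/k"
  have "real (j+1) * h = real j * h + h" "real (j+2) * h = real j * h + 2 * h"
    "real (j+3) * h = real j * h + 3 * h"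
    by (simp_all add: algebra_simps)
  then show ?thesis
    using circle_point_three_term_recurrence[of c r u w] unfolding p h_def[symmetric] by simp
qed

end

lemma gram_determinant_nonneg:
  fixes x y z :: "'a::real_inner"
  assumes "norm x = 1" "norm y = 1" "norm z = 1" "\<bar>inner x y\<bar> < 1"
  shows "1 - (inner x y)\<^sup>2 - (inner y z)\<^sup>2 - (inner x z)\<^sup>2 + 2 * inner x y * inner y z * inner x z \<ge> 0"
proof -
  define p q s where "p = inner x y" and "q = inner y z" and "s = inner x z"
  have "inner x x = 1" "inner y y = 1" "inner z z = 1"
    using assms(1-3) by (simp_all add: dot_square_norm)
  then have sq: "0 \<le> t\<^sup>2 + l\<^sup>2 + m\<^sup>2 - 2 * l * t * s - 2 * m * t * q + 2 * l * m * p" for l m t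
    using inner_ge_zero[of "t *\<^sub>R z - l *\<^sub>R x - m *\<^sub>R y"] unfolding p_def q_def s_def
    by (simp add: inner_diff_left inner_diff_right inner_commute power2_eq_square algebra_simps)
  define D where "D = 1 - p\<^sup>2"
  have "D > 0" using assms(4) unfolding D_def p_def by (simp add: abs_square_less_1)
  \<comment> \<open>with these l, m, t the vector t z - l x - m y is D times the part of z orthogonal to x and y\<close>
  moreover have "D\<^sup>2 + (s - p * q)\<^sup>2 + (q - p * s)\<^sup>2 - 2 * (s - p * q) * D * s - 2 * (q - p * s) * D * q
        + 2 * (s - p * q) * (q - p * s) * p = D * (1 - p\<^sup>2 - q\<^sup>2 - s\<^sup>2 + 2 * p * q * s)"
    unfolding D_def by (simp add: power2_eq_square algebra_simps)
  ultimately have "0 \<le> 1 - p\<^sup>2 - q\<^sup>2 - s\<^sup>2 + 2 * p * q * s"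
    using sq[where l = "s - p * q" and m = "q - p * s" and t = D] by (simp add: zero_le_mult_iff)
  then show ?thesis unfolding p_def q_def s_def by (simp add: algebra_simps)
qed

lemma angle_sum_le_2pi_if_gram_nonneg:
  fixes a b g :: real
  assumes "0 \<le> a" "a \<le> pi" "0 \<le> b" "b \<le> pi" "0 \<le> g" "g \<le> pi" "a + b \<ge> pi"
    and gram: "1 - (cos a)\<^sup>2 - (cos b)\<^sup>2 - (cos g)\<^sup>2 + 2 * cos a * cos b * cos g \<ge> 0"
  shows "a + b + g \<le> 2 * pi"
proof -
  have "sin a \<ge> 0" "sin b \<ge> 0" using assms by (simp_all add: sin_ge_zero)
  have "(sin a * sin b)\<^sup>2 = (1 - (cos a)\<^sup>2) * (1 - (cos b)\<^sup>2)"
    by (simp only: power_mult_distrib sin_squared_eq)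
  then have "1 - (cos a)\<^sup>2 - (cos b)\<^sup>2 - (cos g)\<^sup>2 + 2 * cos a * cos b * cos g
        = (sin a * sin b)\<^sup>2 - (cos g - cos a * cos b)\<^sup>2"
    by (simp add: power2_eq_square algebra_simps)
  with gram have "\<bar>cos g - cos a * cos b\<bar> \<le> \<bar>sin a * sin b\<bar>"
    using abs_le_square_iff by fastforce
  with \<open>sin a \<ge> 0\<close> \<open>sin b \<ge> 0\<close> have "cos (2*pi - (a + b)) \<le> cos g"
    by (simp add: cos_add)
  moreover have "0 \<le> 2*pi - (a + b)" "2*pi - (a + b) \<le> pi" using assms by linarith+
  ultimately have "g \<le> 2*pi - (a + b)"
    using cos_mono_le_eq assms(5,6) by blast
  then show ?thesis by simp
qed

lemma inner_ge_if_equal_inners: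
  fixes x y a c :: "'a::real_inner"
  assumes "norm x = 1" "norm y = 1" "norm a = 1" "norm c = 1"
    and "inner x y = - cn" "inner x a = - c5" "inner y a = - c5" "inner x c = - c5" "inner y c = - c5"
    and "cn < 1"
  shows "inner a c \<ge> 4 * c5\<^sup>2 / (1 - cn) - 1"
proof -
  have unit: "inner x x = 1" "inner y y = 1" "inner a a = 1" "inner c c = 1"
    using assms(1-4) by (simp_all add: dot_square_norm)
  define l where "l = - c5 / (1 - cn)"
  have "l * (1 - cn) = - c5" using assms(10) by (simp add: l_def)
  \<comment> \<open>a and c have the same component l (x + y) along the span of x and y\<close>
  have "0 \<le> inner (a + c - (2*l) *\<^sub>R (x + y)) (a + c - (2*l) *\<^sub>R (x + y))" by simp
  also have "\<dots> = 2 + 2 * inner a c + 16 * l * c5 + 8 * l * (l * (1 - cn))"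
    using unit assms(5-9)
    by (simp add: inner_diff_left inner_diff_right inner_add_left inner_add_right inner_commute
        power2_eq_square algebra_simps)
  also have "\<dots> = 2 + 2 * inner a c - 8 * c5\<^sup>2 / (1 - cn)"
    unfolding \<open>l * (1 - cn) = - c5\<close> by (simp add: l_def power2_eq_square)
  finally show ?thesis by (simp add: field_simps)
qed

lemma interior_angle_mono: "0 < m \<Longrightarrow> m \<le> k \<Longrightarrow> interior_angle m \<le> interior_angle k"
  unfolding interior_angle_def by (simp add: frac_le)

lemma cos_interior_angle: "cos (interior_angle k) = - cos (2*pi/k)"
  by (simp add: interior_angle_def cos_diff)

lemma cos_2pi_div_mono:
  fixes m k :: nat
  assumes "2 \<le> m" "m \<le> k"
  shows "cos (2*pi/m) \<le> cos (2*pi/k)"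
proof (rule cos_monotone_0_pi_le)
  show "2*pi/k \<le> 2*pi/m" using assms by (intro divide_left_mono) auto
  show "0 \<le> 2*pi/k" by simp
  show "2*pi/m \<le> pi" using assms by (simp add: field_simps)
qed

lemma cos_2pi_div_bounds:
  assumes "(n::nat) \<ge> 7"
  shows "1/2 < cos (2*pi/n)" "cos (2*pi/n) < 1"
proof -
  have "2*pi/n \<le> 2*pi/7" using assms by (intro divide_left_mono) auto
  also have "\<dots> < pi/3" by simp
  finally have lt: "2*pi/n < pi/3" .
  have pos: "0 < 2*pi/n" using assms by simp
  show "1/2 < cos (2*pi/n)"
    using cos_monotone_0_pi[of "2*pi/n" "pi/3"] lt pos by (simp add: cos_60)
  show "cos (2*pi/n) < 1"
    using cos_monotone_0_pi[of 0 "2*pi/n"] lt pos by simp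
qed

lemma cos_2pi_div_5:
  "4 * (cos (2*pi/5))\<^sup>2 = 1 - 2 * cos (2*pi/5)" "cos (2*pi/5) < 1/3"
proof -
  define c where "c = cos (2*pi/5)"
  \<comment> \<open>c \<noteq> 1 is a root of cos (3 t) = cos (2 t)\<close>
  have "cos (3 * (2*pi/5)) = cos (2 * (2*pi/5))"
    using cos_2pi_minus[of "2 * (2*pi/5)"] by simp
  then have "(c - 1) * (4 * c\<^sup>2 + 2 * c - 1) = 0"
    unfolding c_def cos_treble_cos cos_double_cos by (simp add: algebra_simps power2_eq_square power3_eq_cube)
  moreover have "c < 1" using cos_monotone_0_pi[of 0 "2*pi/5"] by (simp add: c_def)
  ultimately have q: "4 * c\<^sup>2 + 2 * c - 1 = 0" by simp
  then show "4 * (cos (2*pi/5))\<^sup>2 = 1 - 2 * cos (2*pi/5)" by (simp add: c_def)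
  have "c < 1/3"
  proof (rule ccontr)
    assume "\<not> c < 1/3"
    then have "c\<^sup>2 \<ge> (1/3)\<^sup>2" by (intro power_mono) auto
    then show False using q \<open>\<not> c < 1/3\<close> by (simp add: power2_eq_square)
  qed
  then show "cos (2*pi/5) < 1/3" by (simp add: c_def)
qed

lemma mod_add_neq:
  fixes j d k :: nat
  assumes "0 < d" "d < k"
  shows "j mod k \<noteq> (j + d) mod k"
proof
  assume "j mod k = (j + d) mod k"
  then have "k dvd d" using mod_eq_dvd_iff_nat[of j "j + d" k] by simp
  with assms show False using nat_dvd_not_less by blast
qed

definition corner :: "'v list \<Rightarrow> nat \<Rightarrow> 'v" where
  "corner g j = g ! (j mod length g)"

definition face_edges_at :: "'v list \<Rightarrow> 'v \<Rightarrow> 'v set set" where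
  "face_edges_at g v = {e \<in> face_edges g. v \<in> e}"

context
  fixes g :: "'v list"
  assumes distinct: "distinct g" and length_ge_3: "length g \<ge> 3"
begin

lemma corner_eq_iff: "corner g i = corner g j \<longleftrightarrow> i mod length g = j mod length g"
proof -
  have "length g > 0" using length_ge_3 by linarith
  then show ?thesis unfolding corner_def using distinct by (simp add: nth_eq_iff_index_eq)
qed

lemma corner_Suc_eq_iff: "corner g (i+1) = corner g (j+1) \<longleftrightarrow> corner g i = corner g j"
  unfolding corner_eq_iff by (simp add: nat_mod_eq_iff)

lemma corner_add_length: "corner g (j + length g) = corner g j"
  by (simp add: corner_def)

lemma corner_in_set: "corner g j \<in> set g"
proof -
  have "length g > 0" using length_ge_3 by linarith
  then show ?thesis by (simp add: corner_def)
qed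

lemma corner_neq:
  "corner g j \<noteq> corner g (j+1)" "corner g (j+1) \<noteq> corner g (j+2)" "corner g j \<noteq> corner g (j+2)"
  using mod_add_neq[of 1 "length g"] mod_add_neq[of 2 "length g"] length_ge_3
  by (simp_all add: corner_eq_iff add.assoc)

lemma ex_corner_Suc: "v \<in> set g \<Longrightarrow> \<exists>j. v = corner g (j+1)"
proof -
  assume "v \<in> set g"
  then obtain i where i: "i < length g" "v = g ! i" by (auto simp: in_set_conv_nth)
  moreover have "i + length g - 1 + 1 = i + length g" using length_ge_3 by simp
  ultimately have "(i + length g - 1 + 1) mod length g = i" by simp
  then show ?thesis using i unfolding corner_def by metis
qed

lemma face_edges_corner: "face_edges g = range (\<lambda>i. {corner g i, corner g (i+1)})"
proof (intro set_eqI iffI)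
  fix e assume "e \<in> face_edges g"
  then obtain i where "i < length g" "e = {g ! i, g ! (Suc i mod length g)}"
    unfolding face_edges_def by blast
  then have "e = {corner g i, corner g (i+1)}" by (simp add: corner_def)
  then show "e \<in> range (\<lambda>i. {corner g i, corner g (i+1)})" by blast
next
  fix e assume "e \<in> range (\<lambda>i. {corner g i, corner g (i+1)})"
  then obtain i where "e = {corner g i, corner g (i+1)}" by blast
  then have "e = {g ! (i mod length g), g ! (Suc (i mod length g) mod length g)}"
    by (simp add: corner_def mod_Suc_eq)
  moreover have "i mod length g < length g" using length_ge_3 by (intro mod_less_divisor) linarith
  ultimately show "e \<in> face_edges g" unfolding face_edges_def by blast
qed

lemma face_edges_at_corner:
  "face_edges_at g (corner g (j+1)) = {{corner g j, corner g (j+1)}, {corner g (j+1), corner g (j+2)}}"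
proof -
  have "j + 1 + 1 = j + 2" by simp
  then have neighbours:
    "corner g (j+1) = corner g i \<Longrightarrow> corner g (i+1) = corner g (j+2)"
    "corner g (j+1) = corner g (i+1) \<Longrightarrow> corner g i = corner g j" for i
    using corner_Suc_eq_iff[of i "j+1"] corner_Suc_eq_iff[of j i] by metis+
  show ?thesis
  proof (intro set_eqI iffI)
    fix e assume "e \<in> face_edges_at g (corner g (j+1))"
    then obtain i where "e = {corner g i, corner g (i+1)}" "corner g (j+1) \<in> e"
      unfolding face_edges_at_def face_edges_corner by blast
    with neighbours[of i] show "e \<in> {{corner g j, corner g (j+1)}, {corner g (j+1), corner g (j+2)}}"
      by auto
  next
    fix e assume "e \<in> {{corner g j, corner g (j+1)}, {corner g (j+1), corner g (j+2)}}"
    moreover have "{corner g (j+1), corner g (j+2)} = {corner g (j+1), corner g (j+1+1)}" by simp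
    ultimately show "e \<in> face_edges_at g (corner g (j+1))"
      unfolding face_edges_at_def face_edges_corner by blast
  qed
qed

end

definition edge_faces :: "'v list set \<Rightarrow> 'v set \<Rightarrow> 'v list set" where
  "edge_faces F e = {g \<in> F. e \<in> face_edges g}"

definition vertex_edges :: "'v list set \<Rightarrow> 'v \<Rightarrow> 'v set set" where
  "vertex_edges F v = {e \<in> graph_edges F. v \<in> e}"

lemma finite_face_edges: "finite (face_edges g)"
proof -
  have "face_edges g = (\<lambda>i. {g ! i, g ! (Suc i mod length g)}) ` {..<length g}"
    unfolding face_edges_def by blast
  then show ?thesis by simp
qed

locale regular_polygon_surface =
  fixes F :: "'v list set" and pos :: "'v \<Rightarrow> real^3"
  assumes rps: "rps F pos"
begin

lemma finite_faces: "finite F"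
  using rps by (simp add: rps_def)

lemma face_distinct: "g \<in> F \<Longrightarrow> distinct g"
  using rps by (simp add: rps_def)

lemma face_length_ge_3: "g \<in> F \<Longrightarrow> length g \<ge> 3"
  using rps by (simp add: rps_def)

lemma face_regular: "g \<in> F \<Longrightarrow> regular_unit_polygon (length g) (\<lambda>i. pos (g ! i))"
  using rps by (simp add: rps_def)

lemma card_edge_faces: "e \<in> graph_edges F \<Longrightarrow> card (edge_faces F e) = 2"
  using rps by (simp add: rps_def edge_faces_def)

lemma faces_meet:
  "f \<in> F \<Longrightarrow> g \<in> F \<Longrightarrow> f \<noteq> g \<Longrightarrow>
    set f \<inter> set g = {} \<or> card (set f \<inter> set g) = 1 \<or> set f \<inter> set g \<in> face_edges f \<inter> face_edges g"
  using rps unfolding rps_def by blast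

lemma finite_faces_at: "finite (faces_at F v)"
  using finite_faces by (simp add: faces_at_def)

lemma finite_vertex_edges: "finite (vertex_edges F v)"
proof -
  have "finite (graph_edges F)"
    unfolding graph_edges_def using finite_faces finite_face_edges by blast
  then show ?thesis by (simp add: vertex_edges_def)
qed

lemma face_edges_subset_graph_edges: "g \<in> F \<Longrightarrow> face_edges g \<subseteq> graph_edges F"
  unfolding graph_edges_def by blast

lemma face_edges_at_subset_vertex_edges: "g \<in> F \<Longrightarrow> face_edges_at g v \<subseteq> vertex_edges F v"
  using face_edges_subset_graph_edges by (auto simp: face_edges_at_def vertex_edges_def)

lemma face_edge_subset:
  assumes "g \<in> F" "e \<in> face_edges g"
  shows "e \<subseteq> set g"
  using assms corner_in_set[OF face_distinct face_length_ge_3]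
  by (auto simp: face_edges_corner[OF face_distinct face_length_ge_3])

lemma face_edge_doubleton:
  assumes "g \<in> F" "e \<in> face_edges g"
  obtains a b where "e = {a, b}" "a \<noteq> b"
  using assms corner_neq(1)[OF face_distinct face_length_ge_3]
  by (auto simp: face_edges_corner[OF face_distinct face_length_ge_3])

lemma face_edge_neq: "g \<in> F \<Longrightarrow> {v, a} \<in> face_edges g \<Longrightarrow> a \<noteq> v"
  by (metis face_edge_doubleton doubleton_eq_iff insert_absorb2)

lemma face_edges_at_eq:
  assumes "g \<in> F" "v \<in> set g"
  obtains a b where "a \<noteq> b" "a \<noteq> v" "b \<noteq> v" "face_edges_at g v = {{v, a}, {v, b}}"
proof -
  note g = face_distinct[OF assms(1)] face_length_ge_3[OF assms(1)]
  obtain j where j: "v = corner g (j+1)" using ex_corner_Suc[OF g assms(2)] by blast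
  then have "face_edges_at g v = {{v, corner g j}, {v, corner g (j+2)}}"
    using face_edges_at_corner[OF g, of j] by (simp add: insert_commute)
  moreover have "corner g j \<noteq> corner g (j+2)" "corner g j \<noteq> v" "corner g (j+2) \<noteq> v"
    using corner_neq[OF g, of j] j by auto
  ultimately show thesis using that by blast
qed

lemma card_face_edges_at:
  assumes "g \<in> F" "v \<in> set g"
  shows "card (face_edges_at g v) = 2"
proof -
  obtain a b where "a \<noteq> b" "face_edges_at g v = {{v, a}, {v, b}}"
    using face_edges_at_eq[OF assms] by metis
  then show ?thesis by (simp add: doubleton_eq_iff)
qed

lemma face_edges_at_other:
  assumes "g \<in> F" "{v, w} \<in> face_edges g"
  obtains u where "u \<noteq> w" "u \<noteq> v" "v \<noteq> w" "face_edges_at g v = {{v, w}, {v, u}}"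
proof -
  have "v \<in> set g" using face_edge_subset[OF assms] by auto
  then obtain a b where ab: "a \<noteq> b" "a \<noteq> v" "b \<noteq> v" "face_edges_at g v = {{v, a}, {v, b}}"
    using face_edges_at_eq[OF assms(1)] by blast
  have "{v, w} \<in> face_edges_at g v" using assms(2) by (simp add: face_edges_at_def)
  then have "w = a \<or> w = b" using ab by (auto simp: doubleton_eq_iff)
  then show thesis
  proof
    assume "w = a"
    then show thesis using that[of b] ab by simp
  next
    assume "w = b"
    then show thesis using that[of a] ab by (simp add: insert_commute)
  qed
qed

lemma ex_other_face:
  assumes "g \<in> F" "e \<in> face_edges g"
  obtains h where "h \<in> F" "h \<noteq> g" "e \<in> face_edges h"
proof -
  have "card (edge_faces F e) = 2"
    using assms face_edges_subset_graph_edges card_edge_faces by blast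
  moreover have "g \<in> edge_faces F e" using assms by (simp add: edge_faces_def)
  ultimately obtain h where "h \<in> edge_faces F e" "h \<noteq> g"
    by (metis card_2_iff insertCI)
  then show thesis using that by (auto simp: edge_faces_def)
qed

lemma no_three_faces_on_edge:
  assumes "a \<in> F" "b \<in> F" "c \<in> F" "a \<noteq> b" "a \<noteq> c" "b \<noteq> c"
    and "e \<in> face_edges a" "e \<in> face_edges b" "e \<in> face_edges c"
  shows False
proof -
  have "card (edge_faces F e) = 2"
    using assms face_edges_subset_graph_edges card_edge_faces by blast
  moreover have "{a, b, c} \<subseteq> edge_faces F e" using assms by (simp add: edge_faces_def)
  then have "card {a, b, c} \<le> card (edge_faces F e)"
    using finite_faces by (intro card_mono) (simp_all add: edge_faces_def)
  ultimately show False using assms(4-6) by simp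
qed

lemma card_common_vertices_le_2:
  assumes "f \<in> F" "g \<in> F" "f \<noteq> g"
  shows "card (set f \<inter> set g) \<le> 2"
  using faces_meet[OF assms]
proof (elim disjE)
  assume "set f \<inter> set g \<in> face_edges f \<inter> face_edges g"
  then obtain a b where "set f \<inter> set g = {a, b}" using face_edge_doubleton[OF assms(1)] by blast
  then show ?thesis by (simp add: card_insert_if)
qed auto

lemma card_vertex_edges: "card (vertex_edges F v) = card (faces_at F v)"
proof -
  let ?S = "faces_at F v" and ?E = "vertex_edges F v"
  have edges_at: "face_edges_at g v = {e \<in> ?E. e \<in> face_edges g}" if "g \<in> ?S" for g
    using that face_edges_subset_graph_edges
    by (auto simp: faces_at_def face_edges_at_def vertex_edges_def)
  have faces_on: "edge_faces F e = {g \<in> ?S. e \<in> face_edges g}" if "e \<in> ?E" for e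
    using that face_edge_subset by (auto simp: faces_at_def edge_faces_def vertex_edges_def)
  \<comment> \<open>double counting of the incidences between faces and edges at v\<close>
  have "2 * card ?S = (\<Sum>g\<in>?S. card (face_edges_at g v))"
    by (simp add: card_face_edges_at faces_at_def)
  also have "\<dots> = (\<Sum>g\<in>?S. \<Sum>e\<in>?E. if e \<in> face_edges g then 1 else 0)"
    using edges_at finite_vertex_edges by (simp add: sum.If_cases Int_def)
  also have "\<dots> = (\<Sum>e\<in>?E. \<Sum>g\<in>?S. if e \<in> face_edges g then 1 else 0)"
    by (rule sum.swap)
  also have "\<dots> = (\<Sum>e\<in>?E. card (edge_faces F e))"
    using faces_on finite_faces_at by (simp add: sum.If_cases Int_def)
  also have "\<dots> = 2 * card ?E"
    by (simp add: card_edge_faces vertex_edges_def)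
  finally show ?thesis by simp
qed

lemma vdeg_eq_card_faces_at: "vdeg F v = card (faces_at F v)"
  using card_vertex_edges by (simp add: vdeg_def vertex_edges_def)

lemma card_faces_at_ge_3:
  assumes "f \<in> F" "v \<in> set f"
  shows "card (faces_at F v) \<ge> 3"
proof (rule ccontr)
  assume "\<not> ?thesis"
  obtain a b where ab: "a \<noteq> b" "a \<noteq> v" "b \<noteq> v" "face_edges_at f v = {{v, a}, {v, b}}"
    using face_edges_at_eq[OF assms] by metis
  then have fa: "{v, a} \<in> face_edges f" and fb: "{v, b} \<in> face_edges f"
    by (auto simp: face_edges_at_def)
  obtain h where h: "h \<in> F" "h \<noteq> f" "{v, a} \<in> face_edges h" using ex_other_face[OF assms(1) fa] .
  obtain h' where h': "h' \<in> F" "h' \<noteq> f" "{v, b} \<in> face_edges h'" using ex_other_face[OF assms(1) fb] .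
  have at_v: "h \<in> faces_at F v" "h' \<in> faces_at F v" "f \<in> faces_at F v"
    using face_edge_subset[OF h(1,3)] face_edge_subset[OF h'(1,3)] h h' assms
    by (auto simp: faces_at_def)
  \<comment> \<open>with at most two faces at v, both edges of f at v lie on the same second face\<close>
  have "h = h'"
  proof (rule ccontr)
    assume "h \<noteq> h'"
    then have "card {f, h, h'} = 3" using h h' by auto
    moreover have "card {f, h, h'} \<le> card (faces_at F v)"
      using at_v by (intro card_mono finite_faces_at) auto
    ultimately show False using \<open>\<not> card (faces_at F v) \<ge> 3\<close> by linarith
  qed
  then have "{v, a, b} \<subseteq> set f \<inter> set h"
    using face_edge_subset[OF h(1,3)] face_edge_subset[OF h'(1,3)]
      face_edge_subset[OF assms(1) fa] face_edge_subset[OF assms(1) fb] by auto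
  then have "card {v, a, b} \<le> card (set f \<inter> set h)" by (intro card_mono) auto
  moreover have "card {v, a, b} = 3" using ab by auto
  ultimately show False using card_common_vertices_le_2[OF assms(1) h(1)] h(2) by simp
qed

lemma third_face_at_degree_3:
  assumes S3: "card (faces_at F v) = 3" and g1: "g1 \<in> F" and g2: "g2 \<in> F" and "g1 \<noteq> g2"
    and e1: "face_edges_at g1 v = {{v, u1}, {v, u2}}" and e2: "face_edges_at g2 v = {{v, u1}, {v, u3}}"
    and "u1 \<noteq> u2" "u1 \<noteq> u3"
  obtains g3 where "u3 \<noteq> u2" "g3 \<in> F" "g3 \<noteq> g1" "g3 \<noteq> g2" "faces_at F v = {g1, g2, g3}"
    "face_edges_at g3 v = {{v, u2}, {v, u3}}"
proof -
  let ?S = "faces_at F v" and ?E = "vertex_edges F v"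
  have E: "{v, u1} \<in> ?E" "{v, u2} \<in> ?E" "{v, u3} \<in> ?E"
    using face_edges_at_subset_vertex_edges[OF g1, of v] face_edges_at_subset_vertex_edges[OF g2, of v]
      e1 e2 by auto
  have fe: "{v, u1} \<in> face_edges g1" "{v, u2} \<in> face_edges g1"
    "{v, u1} \<in> face_edges g2" "{v, u3} \<in> face_edges g2"
    using e1 e2 by (auto simp: face_edges_at_def)
  have "g1 \<in> ?S" "g2 \<in> ?S" using face_edge_subset g1 g2 fe by (auto simp: faces_at_def)
  then have "card (?S - {g1, g2}) = 1"
    using S3 \<open>g1 \<noteq> g2\<close> finite_faces_at by (simp add: card_Diff_subset)
  then obtain g3 where "?S - {g1, g2} = {g3}" by (rule card_1_singletonE)
  then have S: "?S = {g1, g2, g3}" and g3: "g3 \<noteq> g1" "g3 \<noteq> g2" "g3 \<in> F" "v \<in> set g3"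
    using \<open>g1 \<in> ?S\<close> \<open>g2 \<in> ?S\<close> by (auto simp: faces_at_def)
  note no_three = no_three_faces_on_edge[OF g1 g2 g3(3) \<open>g1 \<noteq> g2\<close> g3(1)[symmetric] g3(2)[symmetric]]
  have not_u1: "{v, u1} \<notin> face_edges g3"
    using no_three[OF fe(1,3)] by blast
  have u1: "{v, u1} \<noteq> {v, u2}" "{v, u1} \<noteq> {v, u3}" using \<open>u1 \<noteq> u2\<close> \<open>u1 \<noteq> u3\<close>
    by (auto simp: doubleton_eq_iff)
  have sub: "face_edges_at g3 v \<subseteq> ?E - {{v, u1}}"
    using face_edges_at_subset_vertex_edges[OF g3(3), of v] not_u1 by (auto simp: face_edges_at_def)
  have "u3 \<noteq> u2"
  proof
    assume "u3 = u2"
    then have "{v, u2} \<in> face_edges g2" using fe(4) by simp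
    then have "{v, u2} \<notin> face_edges g3" using no_three[OF fe(2)] by blast
    then have "face_edges_at g3 v \<subseteq> ?E - {{v, u1}, {v, u2}}"
      using sub by (auto simp: face_edges_at_def)
    then have "card (face_edges_at g3 v) \<le> card (?E - {{v, u1}, {v, u2}})"
      using finite_vertex_edges by (intro card_mono) auto
    also have "\<dots> = 1" using S3 E u1 card_vertex_edges[of v] by (simp add: card_Diff_subset)
    finally show False using card_face_edges_at[OF g3(3,4)] by simp
  qed
  then have "card {{v, u1}, {v, u2}, {v, u3}} = 3" using u1 by (auto simp: doubleton_eq_iff)
  moreover have "{{v, u1}, {v, u2}, {v, u3}} \<subseteq> ?E" using E by blast
  ultimately have "{{v, u1}, {v, u2}, {v, u3}} = ?E"
    using card_subset_eq[OF finite_vertex_edges] S3 card_vertex_edges[of v] by simp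
  then have sub3: "face_edges_at g3 v \<subseteq> {{v, u2}, {v, u3}}" using sub by auto
  have "card {{v, u2}, {v, u3}} = 2" using \<open>u3 \<noteq> u2\<close> by (auto simp: doubleton_eq_iff)
  then have "face_edges_at g3 v = {{v, u2}, {v, u3}}"
    using card_subset_eq[OF _ sub3] card_face_edges_at[OF g3(3,4)] by simp
  then show thesis using that \<open>u3 \<noteq> u2\<close> g3 S by blast
qed

lemma fourth_face_at_degree_4:
  assumes S4: "card (faces_at F v) = 4" and f: "f \<in> F" and A: "A \<in> F" and C: "C \<in> F"
    and "f \<noteq> A" "f \<noteq> C" "A \<noteq> C"
    and ef: "face_edges_at f v = {{v, w1}, {v, w6}}" and eA: "face_edges_at A v = {{v, w1}, {v, uA}}"
    and eC: "face_edges_at C v = {{v, w6}, {v, uC}}"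
    and "w1 \<noteq> w6" "uA \<noteq> w1" "uC \<noteq> w6"
  obtains B where "uA \<noteq> uC" "B \<in> F" "face_edges_at B v = {{v, uA}, {v, uC}}"
proof -
  let ?S = "faces_at F v" and ?E = "vertex_edges F v"
  have E: "{v, w1} \<in> ?E" "{v, w6} \<in> ?E" "{v, uA} \<in> ?E" "{v, uC} \<in> ?E"
    using face_edges_at_subset_vertex_edges[OF f, of v] face_edges_at_subset_vertex_edges[OF A, of v]
      face_edges_at_subset_vertex_edges[OF C, of v] ef eA eC by auto
  have fe: "{v, w1} \<in> face_edges f" "{v, w6} \<in> face_edges f" "{v, w1} \<in> face_edges A"
    "{v, uA} \<in> face_edges A" "{v, w6} \<in> face_edges C" "{v, uC} \<in> face_edges C"
    using ef eA eC by (auto simp: face_edges_at_def)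
  have "f \<in> ?S" "A \<in> ?S" "C \<in> ?S" using face_edge_subset f A C fe by (auto simp: faces_at_def)
  then have "card (?S - {f, A, C}) = 1"
    using S4 \<open>f \<noteq> A\<close> \<open>f \<noteq> C\<close> \<open>A \<noteq> C\<close> finite_faces_at by (simp add: card_Diff_subset)
  then obtain B where "?S - {f, A, C} = {B}" by (rule card_1_singletonE)
  then have S: "?S = {f, A, C, B}" and B: "B \<noteq> f" "B \<noteq> A" "B \<noteq> C" "B \<in> F" "v \<in> set B"
    using \<open>f \<in> ?S\<close> \<open>A \<in> ?S\<close> \<open>C \<in> ?S\<close> by (auto simp: faces_at_def)
  have "{v, w1} \<notin> face_edges B" "{v, w6} \<notin> face_edges B"
    using no_three_faces_on_edge[OF f A B(4) \<open>f \<noteq> A\<close> B(1)[symmetric] B(2)[symmetric] fe(1,3)]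
      no_three_faces_on_edge[OF f C B(4) \<open>f \<noteq> C\<close> B(1)[symmetric] B(3)[symmetric] fe(2,5)]
    by blast+
  then have sub: "face_edges_at B v \<subseteq> ?E - {{v, w1}, {v, w6}}"
    using face_edges_at_subset_vertex_edges[OF B(4), of v] by (auto simp: face_edges_at_def)
  have w16: "{v, w1} \<noteq> {v, w6}" using \<open>w1 \<noteq> w6\<close> by (auto simp: doubleton_eq_iff)
  have "card (?E - {{v, w1}, {v, w6}}) = 2"
    using S4 E w16 card_vertex_edges[of v] by (simp add: card_Diff_subset)
  then have EB: "face_edges_at B v = ?E - {{v, w1}, {v, w6}}"
    using card_subset_eq[OF _ sub] card_face_edges_at[OF B(4,5)] finite_vertex_edges by simp
  have "{v, uA} \<noteq> {v, w6}"
    using no_three_faces_on_edge[OF f C A \<open>f \<noteq> C\<close> \<open>f \<noteq> A\<close> \<open>A \<noteq> C\<close>[symmetric] fe(2,5)] fe(4)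
    by auto
  moreover have "{v, uC} \<noteq> {v, w1}"
    using no_three_faces_on_edge[OF f A C \<open>f \<noteq> A\<close> \<open>f \<noteq> C\<close> \<open>A \<noteq> C\<close> fe(1,3)] fe(6)
    by auto
  ultimately have AC: "{v, uA} \<in> face_edges_at B v" "{v, uC} \<in> face_edges_at B v"
    using EB E \<open>uA \<noteq> w1\<close> \<open>uC \<noteq> w6\<close> by (auto simp: doubleton_eq_iff)
  have "uA \<noteq> uC"
  proof
    assume "uA = uC"
    \<comment> \<open>then the second edge of B at v lies on no other face at v\<close>
    have "face_edges_at B v \<noteq> {{v, uA}}" using card_face_edges_at[OF B(4,5)] by auto
    with AC(1) obtain e where e: "e \<in> face_edges_at B v" "e \<noteq> {v, uA}" by blast
    then have "e \<in> face_edges B" "v \<in> e" "e \<noteq> {v, w1}" "e \<noteq> {v, w6}"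
      using EB by (auto simp: face_edges_at_def)
    obtain h where h: "h \<in> F" "h \<noteq> B" "e \<in> face_edges h"
      using ex_other_face[OF B(4) \<open>e \<in> face_edges B\<close>] .
    then have "h \<in> ?S" "e \<in> face_edges_at h v"
      using face_edge_subset \<open>v \<in> e\<close> by (auto simp: faces_at_def face_edges_at_def)
    then have "e \<in> face_edges_at f v \<union> face_edges_at A v \<union> face_edges_at C v"
      using S h(2) by auto
    then show False using ef eA eC e(2) \<open>e \<noteq> {v, w1}\<close> \<open>e \<noteq> {v, w6}\<close> \<open>uA = uC\<close> by auto
  qed
  moreover have "face_edges_at B v = {{v, uA}, {v, uC}}"
  proof (rule card_subset_eq[symmetric])
    show "finite (face_edges_at B v)" using card_face_edges_at[OF B(4,5)] by (intro card_ge_0_finite) simp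
    show "{{v, uA}, {v, uC}} \<subseteq> face_edges_at B v" using AC by blast
    show "card {{v, uA}, {v, uC}} = card (face_edges_at B v)"
      using card_face_edges_at[OF B(4,5)] \<open>uA \<noteq> uC\<close> by (simp add: doubleton_eq_iff)
  qed
  ultimately show thesis using that B(4) by blast
qed

lemma norm_corner_step: "g \<in> F \<Longrightarrow> norm (pos (corner g (j+1)) - pos (corner g j)) = 1"
  using regular_unit_polygon_side[OF face_regular] by (simp add: corner_def)

lemma inner_corner_steps:
  "g \<in> F \<Longrightarrow> inner (pos (corner g j) - pos (corner g (j+1))) (pos (corner g (j+2)) - pos (corner g (j+1)))
     = - cos (2*pi / length g)"
  using regular_unit_polygon_inner[OF face_regular] by (simp add: corner_def)

lemma corner_recurrence:
  "g \<in> F \<Longrightarrow> pos (corner g (j+3)) - (1 + 2 * cos (2*pi / length g)) *\<^sub>R pos (corner g (j+2))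
     + (1 + 2 * cos (2*pi / length g)) *\<^sub>R pos (corner g (j+1)) - pos (corner g j) = 0"
  using regular_unit_polygon_recurrence[OF face_regular] by (simp add: corner_def)

lemma norm_face_edge:
  assumes "g \<in> F" "{a, b} \<in> face_edges g"
  shows "norm (pos a - pos b) = 1"
proof -
  obtain i where "{a, b} = {corner g i, corner g (i+1)}"
    using assms face_edges_corner[OF face_distinct face_length_ge_3] by blast
  then show ?thesis using norm_corner_step[OF assms(1), of i]
    by (auto simp: doubleton_eq_iff norm_minus_commute)
qed

lemma face_edges_at_corners:
  assumes g: "g \<in> F" and ab: "face_edges_at g v = {{v, a}, {v, b}}" "a \<noteq> b"
  obtains j where "v = corner g (j+1)"
    "(a = corner g j \<and> b = corner g (j+2)) \<or> (a = corner g (j+2) \<and> b = corner g j)"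
proof -
  note g' = face_distinct[OF g] face_length_ge_3[OF g]
  have "{v, a} \<in> face_edges g" using ab by (auto simp: face_edges_at_def)
  then have "v \<in> set g" using face_edge_subset[OF g] by auto
  then obtain j where j: "v = corner g (j+1)" using ex_corner_Suc[OF g'] by blast
  then have "{{v, a}, {v, b}} = {{v, corner g j}, {v, corner g (j+2)}}"
    using face_edges_at_corner[OF g', of j] ab by (simp add: insert_commute)
  then have "(a = corner g j \<or> a = corner g (j+2)) \<and> (b = corner g j \<or> b = corner g (j+2))"
    by (auto simp: doubleton_eq_iff)
  then show thesis using that j ab(2) by blast
qed

lemma inner_face_edges_at:
  assumes "g \<in> F" "face_edges_at g v = {{v, a}, {v, b}}" "a \<noteq> b"
  shows "inner (pos a - pos v) (pos b - pos v) = - cos (2*pi / length g)"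
  using face_edges_at_corners[OF assms] inner_corner_steps[OF assms(1)]
  by (metis inner_commute)

lemma next_corner_eq:
  assumes g: "g \<in> F" and ev: "face_edges_at g v = {{v, w}, {v, a}}"
    and ew: "face_edges_at g w = {{w, v}, {w, t}}" and "w \<noteq> a" "t \<noteq> v"
  shows "pos t - pos w = (2 * cos (2*pi / length g)) *\<^sub>R (pos w - pos v) + (pos a - pos v)"
proof -
  note g' = face_distinct[OF g] face_length_ge_3[OF g]
  let ?C = "1 + 2 * cos (2*pi / length g)"
  have "t \<noteq> w" using face_edge_neq[OF g] ew by (auto simp: face_edges_at_def insert_commute)
  have t_eq: "t = u" if "face_edges_at g w = {{w, v}, {w, u}}" "u \<noteq> w" for u
    using that ew \<open>t \<noteq> v\<close> \<open>t \<noteq> w\<close> by (auto simp: doubleton_eq_iff)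
  obtain j where j: "v = corner g (j+1)"
    and wa: "(w = corner g j \<and> a = corner g (j+2)) \<or> (w = corner g (j+2) \<and> a = corner g j)"
    using face_edges_at_corners[OF g ev \<open>w \<noteq> a\<close>] .
  from wa show ?thesis
  proof
    assume wa: "w = corner g (j+2) \<and> a = corner g j"
    have "face_edges_at g w = {{w, v}, {w, corner g (j+3)}}"
      using face_edges_at_corner[OF g', of "j+1"] wa j by (simp add: eval_nat_numeral insert_commute)
    moreover have "corner g (j+3) \<noteq> w"
      using corner_neq(2)[OF g', of "j+1"] wa by (simp add: eval_nat_numeral)
    ultimately have "t = corner g (j+3)" by (rule t_eq)
    then show ?thesis using corner_recurrence[OF g, of j] wa j by (simp add: algebra_simps)
  next
    assume wa: "w = corner g j \<and> a = corner g (j+2)"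
    define m where "m = j + length g - 1"
    have "m + 1 = j + length g" "m + 2 = (j+1) + length g" "m + 3 = (j+2) + length g"
      using g'(2) by (simp_all add: m_def)
    then have m: "w = corner g (m+1)" "v = corner g (m+2)" "a = corner g (m+3)"
      using wa j corner_add_length[OF g', of j] corner_add_length[OF g', of "j+1"]
        corner_add_length[OF g', of "j+2"] by (simp_all add: eval_nat_numeral)
    have "face_edges_at g w = {{w, v}, {w, corner g m}}"
      using face_edges_at_corner[OF g', of m] m by (simp add: insert_commute)
    moreover have "corner g m \<noteq> w" using corner_neq(1)[OF g', of m] m by simp
    ultimately have "t = corner g m" by (rule t_eq)
    then show ?thesis using corner_recurrence[OF g, of m] m by (simp add: algebra_simps)
  qed
qed

lemma vertex_curvature_type_55n:
  assumes "vertex_type_55n F v n" "n \<ge> 7"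
  shows "vertex_curvature F v = pi * (2/n - 1/5)"
proof -
  let ?S = "faces_at F v"
  define P N where "P = {g \<in> ?S. length g = 5}" and "N = {g \<in> ?S. length g = n}"
  have card: "card ?S = 3" "card P = 2" "card N = 1"
    using assms(1) by (simp_all add: vertex_type_55n_def P_def N_def)
  have fin: "finite P" "finite N" "P \<inter> N = {}"
    using finite_faces_at assms(2) by (auto simp: P_def N_def)
  then have "card (P \<union> N) = card ?S" using card by (simp add: card_Un_disjoint)
  then have S: "?S = P \<union> N"
    using card_subset_eq[OF finite_faces_at, of "P \<union> N"] by (auto simp: P_def N_def)
  have "(\<Sum>g\<in>?S. interior_angle (length g)) = card P * interior_angle 5 + card N * interior_angle n"
    unfolding S using fin by (simp add: sum.union_disjoint P_def N_def)
  then show ?thesis using card assms(2) by (simp add: vertex_curvature_def interior_angle_def field_simps)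
qed

end

locale rps_57810 = regular_polygon_surface +
  assumes face_lengths: "\<forall>g\<in>F. length g \<in> {5, 7, 8, 9, 10}"
begin

lemma face_length_ge_5: "g \<in> F \<Longrightarrow> length g \<ge> 5"
  using face_lengths by auto

lemma interior_angle_face_bounds:
  assumes "g \<in> F"
  shows "3*pi/5 \<le> interior_angle (length g)" "interior_angle (length g) < pi"
proof -
  have "interior_angle 5 \<le> interior_angle (length g)"
    using face_length_ge_5[OF assms] by (intro interior_angle_mono) auto
  then show "3*pi/5 \<le> interior_angle (length g)" by (simp add: interior_angle_def)
  have "real (length g) > 0" using face_length_ge_5[OF assms] by linarith
  then show "interior_angle (length g) < pi" by (simp add: interior_angle_def)
qed

lemma vertex_curvature_nonneg_if_degree_3:
  assumes S3: "card (faces_at F v) = 3"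
  shows "vertex_curvature F v \<ge> 0"
proof -
  obtain g1 where g1: "g1 \<in> F" "v \<in> set g1"
    using S3 by (metis card.empty ex_in_conv faces_at_def mem_Collect_eq zero_neq_numeral)
  obtain u1 u2 where u: "u1 \<noteq> u2" "u1 \<noteq> v" "u2 \<noteq> v" "face_edges_at g1 v = {{v, u1}, {v, u2}}"
    using face_edges_at_eq[OF g1] by metis
  then have "{v, u1} \<in> face_edges g1" by (auto simp: face_edges_at_def)
  then obtain g2 where g2: "g2 \<in> F" "g2 \<noteq> g1" "{v, u1} \<in> face_edges g2"
    using ex_other_face[OF g1(1)] by blast
  obtain u3 where u3: "u3 \<noteq> u1" "u3 \<noteq> v" "face_edges_at g2 v = {{v, u1}, {v, u3}}"
    using face_edges_at_other[OF g2(1,3)] by metis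
  obtain g3 where g3: "u3 \<noteq> u2" "g3 \<in> F" "g3 \<noteq> g1" "g3 \<noteq> g2" "faces_at F v = {g1, g2, g3}"
      "face_edges_at g3 v = {{v, u2}, {v, u3}}"
    using third_face_at_degree_3[OF S3 g1(1) g2(1) g2(2)[symmetric] u(4) u3(3) u(1) u3(1)[symmetric]] .
  define x y z where "x = pos u1 - pos v" and "y = pos u2 - pos v" and "z = pos u3 - pos v"
  define A1 A2 A3 where "A1 = interior_angle (length g1)" and "A2 = interior_angle (length g2)"
    and "A3 = interior_angle (length g3)"
  have unit: "norm x = 1" "norm y = 1" "norm z = 1"
    using norm_face_edge[OF g1(1), of u1 v] norm_face_edge[OF g1(1), of u2 v]
      norm_face_edge[OF g2(1), of u3 v] u u3
    by (auto simp: x_def y_def z_def face_edges_at_def insert_commute)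
  have "inner x y = cos A1" "inner x z = cos A2" "inner y z = cos A3"
    using inner_face_edges_at[OF g1(1) u(4) u(1)] inner_face_edges_at[OF g2(1) u3(3) u3(1)[symmetric]]
      inner_face_edges_at[OF g3(2) g3(6) g3(1)[symmetric]]
    by (simp_all add: x_def y_def z_def A1_def A2_def A3_def cos_interior_angle)
  moreover have bounds: "3*pi/5 \<le> A1" "A1 < pi" "3*pi/5 \<le> A2" "A2 < pi" "3*pi/5 \<le> A3" "A3 < pi"
    using interior_angle_face_bounds g1(1) g2(1) g3(2) by (simp_all add: A1_def A2_def A3_def)
  moreover have "\<bar>cos A1\<bar> < 1"
    using cos_monotone_0_pi[of A1 pi] cos_monotone_0_pi[of 0 A1] bounds pi_gt_zero by auto
  ultimately have "1 - (cos A1)\<^sup>2 - (cos A2)\<^sup>2 - (cos A3)\<^sup>2 + 2 * cos A1 * cos A2 * cos A3 \<ge> 0"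
    using gram_determinant_nonneg[OF unit] by (simp add: algebra_simps)
  then have "A1 + A2 + A3 \<le> 2*pi"
    using bounds pi_gt_zero by (intro angle_sum_le_2pi_if_gram_nonneg) (auto simp: algebra_simps)
  then show ?thesis
    using g2(2) g3(3,4,5) by (simp add: vertex_curvature_def A1_def A2_def A3_def)
qed

lemma vertex_type_55n_if_degree_3:
  assumes f: "f \<in> F" "v \<in> set f" and n7: "length f \<ge> 7" and S3: "card (faces_at F v) = 3"
  shows "vertex_type_55n F v (length f)"
proof -
  let ?S = "faces_at F v"
  have "f \<in> ?S" using f by (simp add: faces_at_def)
  then have "card (?S - {f}) = 2" using S3 finite_faces_at by simp
  then obtain g2 g3 where g: "?S - {f} = {g2, g3}" "g2 \<noteq> g3" by (meson card_2_iff)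
  then have S: "?S = {f, g2, g3}" "f \<noteq> g2" "f \<noteq> g3" "g2 \<in> F" "g3 \<in> F"
    using \<open>f \<in> ?S\<close> by (auto simp: faces_at_def)
  have sum: "interior_angle (length f) + interior_angle (length g2) + interior_angle (length g3) \<le> 2*pi"
    using vertex_curvature_nonneg_if_degree_3[OF S3] g(2) S by (simp add: vertex_curvature_def)
  have pentagon: "length g = 5"
    if "g \<in> F" "h \<in> F"
      and "interior_angle (length f) + interior_angle (length g) + interior_angle (length h) \<le> 2*pi"
    for g h
  proof (rule ccontr)
    assume "length g \<noteq> 5"
    then have "interior_angle 7 \<le> interior_angle (length g)"
      using that(1) face_lengths by (intro interior_angle_mono) auto
    moreover have "interior_angle 7 \<le> interior_angle (length f)"
      using n7 by (intro interior_angle_mono) auto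
    moreover have "interior_angle 7 = 5*pi/7" by (simp add: interior_angle_def)
    ultimately show False
      using that(3) interior_angle_face_bounds(1)[OF that(2)] pi_gt_zero by linarith
  qed
  have "length g2 = 5" "length g3 = 5"
    using pentagon[of g2 g3] pentagon[of g3 g2] sum S by (simp_all add: algebra_simps)
  then have "{g \<in> ?S. length g = 5} = {g2, g3}" "{g \<in> ?S. length g = length f} = {f}"
    using S n7 by auto
  then show ?thesis
    using S3 g(2) by (simp add: vertex_type_55n_def vdeg_eq_card_faces_at)
qed

lemma pentagon_at_type_55n_corner:
  assumes f: "f \<in> F" "length f \<ge> 7" and w: "vertex_type_55n F w (length f)"
    and A: "A \<in> F" "A \<noteq> f" and e: "e \<in> face_edges f" "e \<in> face_edges A" "w \<in> e"
  shows "length A = 5"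
proof -
  let ?S = "faces_at F w"
  have "f \<in> ?S" "A \<in> ?S" using face_edge_subset f A e by (auto simp: faces_at_def)
  have "{g \<in> ?S. length g = 5} \<subseteq> ?S - {f}" using f by auto
  moreover have "card {g \<in> ?S. length g = 5} = 2" "card (?S - {f}) = 2"
    using w \<open>f \<in> ?S\<close> finite_faces_at by (simp_all add: vertex_type_55n_def)
  ultimately have "{g \<in> ?S. length g = 5} = ?S - {f}"
    using finite_faces_at by (simp add: card_subset_eq)
  then show ?thesis using \<open>A \<in> ?S\<close> A(2) by blast
qed

lemma inner_across_type_55n_corner:
  assumes f: "f \<in> F" "length f \<ge> 7" and ef: "face_edges_at f v = {{v, w}, {v, y}}" "w \<noteq> y"
    and w: "vertex_type_55n F w (length f)"
    and A: "A \<in> F" "A \<noteq> f" and eA: "face_edges_at A v = {{v, w}, {v, a}}" "a \<noteq> w"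
  shows "inner (pos y - pos v) (pos a - pos v) = - cos (2*pi/5)"
proof -
  have "{w, v} \<in> face_edges f" "{w, v} \<in> face_edges A"
    using ef eA by (auto simp: face_edges_at_def insert_commute)
  then obtain w2 t where w2: "w2 \<noteq> v" "w2 \<noteq> w" "face_edges_at f w = {{w, v}, {w, w2}}"
    and t: "t \<noteq> v" "t \<noteq> w" "face_edges_at A w = {{w, v}, {w, t}}"
    using face_edges_at_other[OF f(1)] face_edges_at_other[OF A(1)] by metis
  have S3: "card (faces_at F w) = 3" using w by (simp add: vertex_type_55n_def)
  obtain X where X: "t \<noteq> w2" "X \<in> F" "X \<noteq> f" "face_edges_at X w = {{w, w2}, {w, t}}"
    using third_face_at_degree_3[OF S3 f(1) A(1) A(2)[symmetric] w2(3) t(3) w2(1)[symmetric] t(1)[symmetric]]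
    by metis
  have "{w, v} \<in> face_edges A" "{w, w2} \<in> face_edges f" "{w, w2} \<in> face_edges X"
    using \<open>{w, v} \<in> face_edges A\<close> w2(3) X(4) by (auto simp: face_edges_at_def)
  then have "length A = 5" "length X = 5"
    using pentagon_at_type_55n_corner[OF f w] A X(2,3) \<open>{w, v} \<in> face_edges f\<close> by blast+
  define x y' a' where "x = pos w - pos v" and "y' = pos y - pos v" and "a' = pos a - pos v"
  define cn c5 where "cn = cos (2*pi / length f)" and "c5 = cos (2*pi/5)"
  \<comment> \<open>the two edges of the pentagon X at w continue the polygons f and A beyond w\<close>
  have q: "pos w2 - pos w = (2*cn) *\<^sub>R x + y'"
    using next_corner_eq[OF f(1) ef(1) w2(3) ef(2) w2(1)] by (simp add: x_def y'_def cn_def)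
  have r: "pos t - pos w = (2*c5) *\<^sub>R x + a'"
    using next_corner_eq[OF A(1) eA(1) t(3) eA(2)[symmetric] t(1)] \<open>length A = 5\<close>
    by (simp add: x_def a'_def c5_def)
  have "inner x x = 1" "inner x y' = - cn" "inner x a' = - c5"
    using norm_face_edge[OF f(1) \<open>{w, v} \<in> face_edges f\<close>] inner_face_edges_at[OF f(1) ef]
      inner_face_edges_at[OF A(1) eA(1)] eA(2) \<open>length A = 5\<close>
    by (simp_all add: x_def y'_def a'_def cn_def c5_def dot_square_norm)
  then have "inner (pos w2 - pos w) (pos t - pos w) = inner y' a'"
    unfolding q r by (simp add: inner_add_left inner_add_right inner_commute algebra_simps)
  moreover have "inner (pos w2 - pos w) (pos t - pos w) = - c5"
    using inner_face_edges_at[OF X(2,4) X(1)[symmetric]] \<open>length X = 5\<close> by (simp add: c5_def)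
  ultimately show ?thesis by (simp add: y'_def a'_def c5_def)
qed

lemma not_degree_4_between_type_55n:
  assumes f: "f \<in> F" "length f \<ge> 7" and ef: "face_edges_at f v = {{v, w1}, {v, w6}}" "w1 \<noteq> w6"
    and w1: "vertex_type_55n F w1 (length f)" and w6: "vertex_type_55n F w6 (length f)"
  shows "card (faces_at F v) \<noteq> 4"
proof
  assume S4: "card (faces_at F v) = 4"
  have fe: "{v, w1} \<in> face_edges f" "{v, w6} \<in> face_edges f" using ef by (auto simp: face_edges_at_def)
  obtain A where A: "A \<in> F" "A \<noteq> f" "{v, w1} \<in> face_edges A" using ex_other_face[OF f(1) fe(1)] .
  obtain C where C: "C \<in> F" "C \<noteq> f" "{v, w6} \<in> face_edges C" using ex_other_face[OF f(1) fe(2)] .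
  obtain uA where uA: "uA \<noteq> w1" "uA \<noteq> v" "face_edges_at A v = {{v, w1}, {v, uA}}"
    using face_edges_at_other[OF A(1,3)] by metis
  obtain uC where uC: "uC \<noteq> w6" "uC \<noteq> v" "face_edges_at C v = {{v, w6}, {v, uC}}"
    using face_edges_at_other[OF C(1,3)] by metis
  have "A \<noteq> C"
  proof
    assume "A = C"
    then have "{v, w1, w6} \<subseteq> set f \<inter> set A"
      using face_edge_subset f(1) A C fe by blast
    then have "card {v, w1, w6} \<le> card (set f \<inter> set A)" by (intro card_mono) auto
    moreover have "card {v, w1, w6} = 3"
      using ef(2) face_edge_neq[OF f(1) fe(1)] face_edge_neq[OF f(1) fe(2)] by auto
    ultimately show False using card_common_vertices_le_2[OF f(1) A(1)] A(2) by simp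
  qed
  obtain B where B: "uA \<noteq> uC" "B \<in> F" "face_edges_at B v = {{v, uA}, {v, uC}}"
    using fourth_face_at_degree_4[OF S4 f(1) A(1) C(1) A(2)[symmetric] C(2)[symmetric] \<open>A \<noteq> C\<close>
        ef(1) uA(3) uC(3) ef(2) uA(1) uC(1)] .
  have "length A = 5" "length C = 5"
    using pentagon_at_type_55n_corner[OF f w1 A(1,2) fe(1) A(3)]
      pentagon_at_type_55n_corner[OF f w6 C(1,2) fe(2) C(3)] by simp_all
  define x y a c where "x = pos w1 - pos v" and "y = pos w6 - pos v"
    and "a = pos uA - pos v" and "c = pos uC - pos v"
  define cn c5 where "cn = cos (2*pi / length f)" and "c5 = cos (2*pi/5)"
  have cn: "1/2 < cn" "cn < 1" using cos_2pi_div_bounds[OF f(2)] by (simp_all add: cn_def)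
  have c5: "4 * c5\<^sup>2 = 1 - 2 * c5" "c5 < 1/3" using cos_2pi_div_5 by (simp_all add: c5_def)
  have "inner a c \<ge> 4 * c5\<^sup>2 / (1 - cn) - 1"
  proof (rule inner_ge_if_equal_inners)
    show "norm x = 1" "norm y = 1" "norm a = 1" "norm c = 1"
      using norm_face_edge[OF f(1) fe(1)] norm_face_edge[OF f(1) fe(2)] A C uA(3) uC(3)
        norm_face_edge[OF A(1), of uA v] norm_face_edge[OF C(1), of uC v]
      by (auto simp: x_def y_def a_def c_def norm_minus_commute face_edges_at_def insert_commute)
    show "inner x y = - cn" using inner_face_edges_at[OF f(1) ef] by (simp add: x_def y_def cn_def)
    show "inner x a = - c5"
      using inner_face_edges_at[OF A(1) uA(3) uA(1)[symmetric]] \<open>length A = 5\<close>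
      by (simp add: x_def a_def c5_def)
    show "inner y a = - c5"
      using inner_across_type_55n_corner[OF f ef w1 A(1,2) uA(3,1)] by (simp add: y_def a_def c5_def)
    show "inner x c = - c5"
      using inner_across_type_55n_corner[OF f _ ef(2)[symmetric] w6 C(1,2) uC(3,1)] ef(1)
      by (simp add: x_def c_def c5_def insert_commute)
    show "inner y c = - c5"
      using inner_face_edges_at[OF C(1) uC(3) uC(1)[symmetric]] \<open>length C = 5\<close>
      by (simp add: y_def c_def c5_def)
  qed (use cn in simp)
  moreover have "inner a c \<le> - c5"
    using inner_face_edges_at[OF B(2,3,1)] cos_2pi_div_mono[of 5 "length B"] face_length_ge_5[OF B(2)]
    by (simp add: a_def c_def c5_def)
  ultimately have "(1 - 2 * c5) / (1 - cn) \<le> 1 - c5" using c5(1) by simp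
  then have "1 - 2 * c5 \<le> (1 - c5) * (1 - cn)" using cn by (simp add: pos_divide_le_eq)
  then have "cn \<le> c5 * (1 + cn)" by (simp add: algebra_simps)
  also have "\<dots> < (1 + cn) / 3" using c5(2) cn by simp
  finally show False using cn by simp
qed

lemma vertex_curvature_le:
  assumes "f \<in> F" "v \<in> set f"
  shows "vertex_curvature F v \<le> 2*pi - interior_angle (length f) - (card (faces_at F v) - 1) * (3*pi/5)"
proof -
  let ?S = "faces_at F v"
  have "f \<in> ?S" using assms by (simp add: faces_at_def)
  have "(card ?S - 1) * (3*pi/5) = card (?S - {f}) * (3*pi/5)"
    using \<open>f \<in> ?S\<close> finite_faces_at card_faces_at_ge_3[OF assms] by (simp add: of_nat_diff)
  also have "\<dots> \<le> (\<Sum>g\<in>?S - {f}. interior_angle (length g))"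
    using interior_angle_face_bounds(1) by (intro sum_bounded_below) (simp add: faces_at_def)
  also have "\<dots> = (\<Sum>g\<in>?S. interior_angle (length g)) - interior_angle (length f)"
    using sum.remove[OF finite_faces_at \<open>f \<in> ?S\<close>, of "\<lambda>g. interior_angle (length g)"] by simp
  finally show ?thesis by (simp add: vertex_curvature_def)
qed

lemma curvature_share_le:
  assumes "f \<in> F" "v \<in> set f" "card (faces_at F v) \<ge> d" "d > 0"
  shows "vertex_curvature F v / vdeg F v \<le> (pi + 2*pi / length f + 3*pi/5) / d - 3*pi/5"
proof -
  define K where "K = pi + 2*pi / length f + 3*pi/5"
  define e where "e = real (card (faces_at F v))"
  have "e \<ge> d" "K > 0" using assms(3) by (simp_all add: e_def K_def add_pos_nonneg)
  have "2*pi - interior_angle (length f) - (e - 1) * (3*pi/5) = K - e * (3*pi/5)"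
    by (simp add: interior_angle_def K_def field_simps)
  moreover have "real (card (faces_at F v) - 1) = e - 1"
    using card_faces_at_ge_3[OF assms(1,2)] by (simp add: e_def of_nat_diff)
  ultimately have "vertex_curvature F v \<le> K - e * (3*pi/5)"
    using vertex_curvature_le[OF assms(1,2)] by simp
  then have "vertex_curvature F v / e \<le> (K - e * (3*pi/5)) / e"
    using \<open>e \<ge> d\<close> assms(4) by (simp add: divide_right_mono)
  also have "\<dots> = K / e - 3*pi/5"
    using \<open>e \<ge> d\<close> assms(4) by (simp add: field_simps)
  also have "\<dots> \<le> K / d - 3*pi/5"
    using \<open>e \<ge> d\<close> \<open>K > 0\<close> assms(4) by (simp add: frac_le)
  finally show ?thesis by (simp add: e_def K_def vdeg_eq_card_faces_at)
qed

lemma card_faces_at_ge_4_if_not_type_55n: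
  assumes "f \<in> F" "v \<in> set f" "length f \<ge> 7" "\<not> vertex_type_55n F v (length f)"
  shows "card (faces_at F v) \<ge> 4"
  using card_faces_at_ge_3[OF assms(1,2)] vertex_type_55n_if_degree_3[OF assms(1-3)] assms(4)
  by fastforce

lemma card_faces_at_ge_5_if_neighbours_type_55n:
  assumes f: "f \<in> F" "length f \<ge> 7" and v: "v \<in> set f" "\<not> vertex_type_55n F v (length f)"
    and others: "\<forall>u\<in>set f - {v}. vertex_type_55n F u (length f)"
  shows "card (faces_at F v) \<ge> 5"
proof -
  obtain a b where ab: "a \<noteq> b" "a \<noteq> v" "b \<noteq> v" "face_edges_at f v = {{v, a}, {v, b}}"
    using face_edges_at_eq[OF f(1) v(1)] by metis
  then have "a \<in> set f" "b \<in> set f" using face_edge_subset[OF f(1)] by (auto simp: face_edges_at_def)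
  then have "card (faces_at F v) \<noteq> 4"
    using not_degree_4_between_type_55n[OF f ab(4,1)] others ab(2,3) by blast
  then show ?thesis using card_faces_at_ge_4_if_not_type_55n[OF f(1) v(1) f(2) v(2)] by simp
qed

lemma facial_curvature_split:
  assumes f: "f \<in> F" "length f \<ge> 7"
  defines "B \<equiv> {v \<in> set f. \<not> vertex_type_55n F v (length f)}"
  shows "facial_curvature F f = (real (length f) - card B) * (pi * (2 / length f - 1/5) / 3)
    + (\<Sum>v\<in>B. vertex_curvature F v / vdeg F v)"
proof -
  define share where "share v = vertex_curvature F v / vdeg F v" for v
  have "share v = pi * (2 / length f - 1/5) / 3" if "v \<in> set f - B" for v
    using that vertex_curvature_type_55n[of v "length f"] f(2)
    by (simp add: share_def B_def vertex_type_55n_def vdeg_eq_card_faces_at)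
  then have "(\<Sum>v\<in>set f - B. share v) = card (set f - B) * (pi * (2 / length f - 1/5) / 3)"
    using sum.cong[of "set f - B" "set f - B" share "\<lambda>_. pi * (2 / length f - 1/5) / 3"] by simp
  moreover have "B \<subseteq> set f" by (auto simp: B_def)
  moreover have "real (card (set f - B)) = real (length f) - card B"
    using \<open>B \<subseteq> set f\<close> distinct_card[OF face_distinct[OF f(1)]] card_mono[OF finite_set \<open>B \<subseteq> set f\<close>]
    by (simp add: card_Diff_subset of_nat_diff finite_subset)
  ultimately show ?thesis
    using sum.subset_diff[OF \<open>B \<subseteq> set f\<close> finite_set, of share]
    by (simp add: facial_curvature_def flip: share_def)
qed

lemma facial_curvature_neg_if_not_all_type_55n:
  assumes f: "f \<in> F" "length f \<ge> 7" and "\<exists>v\<in>set f. \<not> vertex_type_55n F v (length f)"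
  shows "facial_curvature F f < 0"
proof -
  define n where "n = length f"
  define share where "share v = vertex_curvature F v / vdeg F v" for v
  define B where "B = {v \<in> set f. \<not> vertex_type_55n F v n}"
  have n: "real n \<in> {7, 8, 9, 10}" using face_lengths f unfolding n_def by auto
  have B: "finite B" "card B \<ge> 1"
    using assms(3) by (auto simp: B_def n_def card_gt_0_iff Suc_le_eq)
  have split: "facial_curvature F f = (real n - card B) * (pi * (2/n - 1/5) / 3) + (\<Sum>v\<in>B. share v)"
    using facial_curvature_split[OF f] by (simp add: B_def n_def share_def)
  consider "n \<noteq> 7 \<or> card B \<ge> 2" | "n = 7" "card B = 1" using B(2) by linarith
  then show ?thesis
  proof cases
    case 1
    have "share v \<le> pi * (1/(2*n) - 1/5)" if "v \<in> B" for v
    proof -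
      have "share v \<le> (pi + 2*pi/n + 3*pi/5) / 4 - 3*pi/5"
        using curvature_share_le[OF f(1), of v 4] that
          card_faces_at_ge_4_if_not_type_55n[OF f(1) _ f(2)]
        by (simp add: share_def B_def n_def)
      also have "\<dots> = pi * (1/(2*n) - 1/5)" by (simp add: field_simps)
      finally show ?thesis .
    qed
    then have "(\<Sum>v\<in>B. share v) \<le> card B * (pi * (1/(2*n) - 1/5))" by (rule sum_bounded_above)
    then have "facial_curvature F f \<le> pi * ((n - real (card B)) * ((2/n - 1/5) / 3) + card B * (1/(2*n) - 1/5))"
      using split by (simp add: algebra_simps)
    also have "\<dots> < 0"
      using n 1 B(2) by (intro mult_pos_neg pi_gt_zero) (auto simp: field_simps)
    finally show ?thesis .
  next
    case 2
    then obtain v where "B = {v}" by (meson card_1_singletonE)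
    then have "card (faces_at F v) \<ge> 5" "v \<in> set f"
      using card_faces_at_ge_5_if_neighbours_type_55n[OF f, of v] by (auto simp: B_def n_def)
    then have "share v \<le> (pi + 2*pi/7 + 3*pi/5) / 5 - 3*pi/5"
      using curvature_share_le[OF f(1), of v 5] 2 by (simp add: share_def n_def)
    then have "facial_curvature F f \<le> 6 * (pi * (2/7 - 1/5) / 3) + ((pi + 2*pi/7 + 3*pi/5) / 5 - 3*pi/5)"
      using split 2 \<open>B = {v}\<close> by simp
    also have "\<dots> = - 9/175 * pi" by (simp add: field_simps)
    finally show ?thesis using pi_gt_zero by linarith
  qed
qed

end

theorem lemma3p1:
  fixes F :: "'v list set" and pos :: "'v \<Rightarrow> real^3" and f :: "'v list"
  assumes "rps F pos"
    and "\<forall>g\<in>F. length g \<in> {5, 7, 8, 9, 10}"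
    and "f \<in> F" and "length f \<ge> 7"
  shows "(facial_curvature F f > 0 \<longrightarrow> (\<forall>v\<in>set f. vertex_type_55n F v (length f)))
       \<and> ((\<exists>v\<in>set f. vertex_curvature F v < 0) \<longrightarrow> facial_curvature F f < 0)"
proof -
  interpret rps_57810 F pos
    using assms(1,2) by unfold_locales
  have "vertex_curvature F v \<ge> 0" if "vertex_type_55n F v (length f)" for v
  proof -
    have "length f \<le> 10" using assms(2,3) by auto
    moreover have "real (length f) > 0" using assms(4) by linarith
    ultimately have "1/5 \<le> 2 / real (length f)" by (simp add: field_simps)
    then show ?thesis using vertex_curvature_type_55n[OF that assms(4)] by simp
  qed
  then show ?thesis
    using facial_curvature_neg_if_not_all_type_55n[OF assms(3,4)] by force
qed

end
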